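(* For any even integer $n\ge 0$ and prime $p\ge 3n+7$ we have \begin{align*} \sum_{a,b\ge 0,\, a+b=p-3n-3} \frac{B_b}{p-b}\binom{p-b}{n+1} \frac{B_a}{p-a} \binom{p-a}{n+2}\equiv 0 & \pmod {p},\\ \sum_{a,b\ge 0,\, a+b=p-3n-3} \frac{B_b}{p-b}\binom{p-b}{n+1} \frac{B_a}{p-a} \binom{p-a}{n+1} \equiv 0 &\pmod {p}. \end{align*}
   Context: $B_m$ are the Bernoulli numbers defined by $t/(e^t-1)=\sum_{k\ge 0} B_k t^k/k!$. *)

theory Defs
  imports "HOL-Computational_Algebra.Computational_Algebra"
begin

definition bernoulli :: "nat \<Rightarrow> rat" where
  "bernoulli k = fact k * fps_nth (fps_X / (fps_exp 1 - 1)) k"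

definition rat_cong0 :: "rat \<Rightarrow> nat \<Rightarrow> bool" where
  "rat_cong0 q p \<longleftrightarrow> (\<exists>x y :: int. y \<noteq> 0 \<and> \<not> int p dvd y \<and> int p dvd x \<and> q = of_int x / of_int y)"

end

theory Submission
  imports "HOL-Number_Theory.Residues" Defs
begin

(*
  Put q = p - n - 3 and let F and G be the Faulhaber polynomials with F(x) = sum_{j<x} j^(q+1)
  and G(x) = sum_{j<x} j^q; their coefficients are C(m+1, a) B_a / (m+1), which are p-integral.
  Summing the telescoping identity for F(x)^2 G(x) over x < p and reducing each power sum
  sum_{x<p} x^e modulo p (it is -1 if 0 < e and p - 1 divides e, and 0 otherwise) yields a linear
  congruence between two coefficients of F G and two of F^2.  As B_(q+1) = 0 we have F' = (q+1) G,
  which relates the coefficients of F^2 and F G; together this forces the coefficients of F^2 and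
  F G in degrees p + n + 1 and p + n to vanish mod p.  These are convolutions of Faulhaber
  coefficients, and C(p-1-u, v) = (-1)^v C(u+v, v) mod p turns each term B_b/(p-b) C(p-b, v+1) of
  the theorem into a unit multiple of (-1)^b times such a coefficient.  The signs cancel since
  p - 3n - 3 is even.
*)

(* Residues (for fermat_theorem) is imported before Defs so that coeff and monom denote the
   polynomial operations rather than those of HOL-Algebra. *)

section \<open>Rationals that are integral at p\<close>

definition p_integral :: "rat \<Rightarrow> nat \<Rightarrow> bool" where
  "p_integral q p \<longleftrightarrow> (\<exists>x y :: int. y \<noteq> 0 \<and> \<not> int p dvd y \<and> q = of_int x / of_int y)"

lemma p_integral_of_int: "prime p \<Longrightarrow> p_integral (of_int z) p"
  unfolding p_integral_def by (intro exI[of _ z] exI[of _ 1]) (auto simp: prime_nat_iff)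

lemma p_integral_of_nat: "prime p \<Longrightarrow> p_integral (of_nat k) p"
  using p_integral_of_int[of p "int k"] by simp

lemma p_integral_0: "prime p \<Longrightarrow> p_integral 0 p"
  using p_integral_of_int[of p 0] by simp

lemma p_integral_1: "prime p \<Longrightarrow> p_integral 1 p"
  using p_integral_of_int[of p 1] by simp

lemma p_integral_add:
  assumes "prime p" "p_integral a p" "p_integral b p"
  shows "p_integral (a + b) p"
proof -
  obtain x y x' y' :: int where "y \<noteq> 0" "\<not> int p dvd y" "a = of_int x / of_int y"
    and "y' \<noteq> 0" "\<not> int p dvd y'" "b = of_int x' / of_int y'"
    using assms(2,3) unfolding p_integral_def by blast
  moreover from this have "a + b = of_int (x * y' + x' * y) / of_int (y * y')"
    by (simp add: field_simps)
  ultimately show ?thesis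
    using assms(1) unfolding p_integral_def
    by (intro exI[of _ "x * y' + x' * y"] exI[of _ "y * y'"]) (simp add: prime_dvd_mult_iff)
qed

lemma p_integral_mult:
  assumes "prime p" "p_integral a p" "p_integral b p"
  shows "p_integral (a * b) p"
proof -
  obtain x y x' y' :: int where "y \<noteq> 0" "\<not> int p dvd y" "a = of_int x / of_int y"
    and "y' \<noteq> 0" "\<not> int p dvd y'" "b = of_int x' / of_int y'"
    using assms(2,3) unfolding p_integral_def by blast
  then show ?thesis
    using assms(1) unfolding p_integral_def
    by (intro exI[of _ "x * x'"] exI[of _ "y * y'"]) (simp add: prime_dvd_mult_iff)
qed

lemma p_integral_minus: "p_integral a p \<Longrightarrow> p_integral (- a) p"
  unfolding p_integral_def by (metis minus_divide_left of_int_minus)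

lemma p_integral_divide_of_nat:
  assumes "prime p" "p_integral a p" "\<not> p dvd c"
  shows "p_integral (a / of_nat c) p"
proof -
  obtain x y :: int where "y \<noteq> 0" "\<not> int p dvd y" "a = of_int x / of_int y"
    using assms(2) unfolding p_integral_def by blast
  moreover have "c \<noteq> 0" using assms(3) by (metis dvd_0_right)
  moreover have "\<not> int p dvd int c" using assms(3) by simp
  ultimately show ?thesis
    using assms(1) unfolding p_integral_def
    by (intro exI[of _ x] exI[of _ "y * int c"]) (simp add: prime_dvd_mult_iff)
qed

lemma p_integral_sum:
  "prime p \<Longrightarrow> (\<And>i. i \<in> A \<Longrightarrow> p_integral (f i) p) \<Longrightarrow> p_integral (\<Sum>i\<in>A. f i) p"
  by (induction A rule: infinite_finite_induct) (auto simp: p_integral_0 p_integral_add)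

lemma p_integral_power: "prime p \<Longrightarrow> p_integral a p \<Longrightarrow> p_integral (a ^ k) p"
  by (induction k) (auto simp: p_integral_1 p_integral_mult)

lemma rat_cong0_iff_p_integral:
  "rat_cong0 q p \<longleftrightarrow> (\<exists>r. p_integral r p \<and> q = of_nat p * r)"
proof
  assume "rat_cong0 q p"
  then obtain x y :: int where "y \<noteq> 0" "\<not> int p dvd y" "int p dvd x" "q = of_int x / of_int y"
    unfolding rat_cong0_def by blast
  moreover from this obtain k where "x = int p * k" by blast
  ultimately show "\<exists>r. p_integral r p \<and> q = of_nat p * r"
    unfolding p_integral_def by (intro exI[of _ "of_int k / of_int y"]) auto
next
  assume "\<exists>r. p_integral r p \<and> q = of_nat p * r"
  then obtain x y :: int where "y \<noteq> 0" "\<not> int p dvd y" "q = of_nat p * (of_int x / of_int y)"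
    unfolding p_integral_def by blast
  then show "rat_cong0 q p"
    unfolding rat_cong0_def by (intro exI[of _ "int p * x"] exI[of _ y]) auto
qed

lemma rat_cong0_of_nat_mult: "p_integral r p \<Longrightarrow> rat_cong0 (of_nat p * r) p"
  unfolding rat_cong0_iff_p_integral by blast

lemma rat_cong0_imp_p_integral:
  assumes "prime p" "rat_cong0 q p"
  shows "p_integral q p"
  using assms p_integral_mult[OF assms(1) p_integral_of_nat] unfolding rat_cong0_iff_p_integral by blast

lemma rat_cong0_0: "prime p \<Longrightarrow> rat_cong0 0 p"
  using rat_cong0_of_nat_mult[OF p_integral_0] by simp

lemma rat_cong0_add:
  assumes "prime p" "rat_cong0 a p" "rat_cong0 b p"
  shows "rat_cong0 (a + b) p"
  using assms p_integral_add[OF assms(1)] unfolding rat_cong0_iff_p_integral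
  by (metis distrib_left)

lemma rat_cong0_mult:
  assumes "prime p" "rat_cong0 a p" "p_integral b p"
  shows "rat_cong0 (a * b) p"
  using assms p_integral_mult[OF assms(1)] unfolding rat_cong0_iff_p_integral
  by (metis mult.assoc)

lemma rat_cong0_mult_left:
  "prime p \<Longrightarrow> p_integral a p \<Longrightarrow> rat_cong0 b p \<Longrightarrow> rat_cong0 (a * b) p"
  using rat_cong0_mult[of p b a] by (simp add: mult.commute)

lemma rat_cong0_minus: "rat_cong0 a p \<Longrightarrow> rat_cong0 (- a) p"
  unfolding rat_cong0_iff_p_integral using p_integral_minus by fastforce

lemma rat_cong0_diff: "prime p \<Longrightarrow> rat_cong0 a p \<Longrightarrow> rat_cong0 b p \<Longrightarrow> rat_cong0 (a - b) p"
  using rat_cong0_add[of p a "- b"] rat_cong0_minus by simp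

lemma rat_cong0_sum:
  "prime p \<Longrightarrow> (\<And>i. i \<in> A \<Longrightarrow> rat_cong0 (f i) p) \<Longrightarrow> rat_cong0 (\<Sum>i\<in>A. f i) p"
  by (induction A rule: infinite_finite_induct) (auto simp: rat_cong0_0 rat_cong0_add)

lemma rat_cong0_cancel_of_nat:
  assumes "prime p" "\<not> p dvd c" "rat_cong0 (of_nat c * a) p"
  shows "rat_cong0 a p"
proof -
  have "a = of_nat c * a / of_nat c" using assms(2) by (cases "c = 0") auto
  with assms show ?thesis
    unfolding rat_cong0_iff_p_integral using p_integral_divide_of_nat by (metis times_divide_eq_right)
qed

lemma rat_cong0_mult_diff:
  assumes "prime p" "rat_cong0 (x - x') p" "rat_cong0 (y - y') p" "p_integral y p" "p_integral x' p"
  shows "rat_cong0 (x * y - x' * y') p"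
proof -
  have "x * y - x' * y' = (x - x') * y + x' * (y - y')" by (simp add: algebra_simps)
  also have "rat_cong0 \<dots> p"
    using assms by (intro rat_cong0_add rat_cong0_mult rat_cong0_mult_left)
  finally show ?thesis .
qed

lemma rat_cong0_of_int_cong:
  assumes "prime p" "[x = y] (mod int p)"
  shows "rat_cong0 (of_int x - of_int y) p"
proof -
  obtain k where "x - y = int p * k"
    using assms(2) by (auto simp: cong_iff_dvd_diff elim: dvdE)
  then have "of_int x - of_int y = of_nat p * (of_int k :: rat)"
    by (metis of_int_diff of_int_mult of_int_of_nat_eq)
  then show ?thesis
    using rat_cong0_of_nat_mult[OF p_integral_of_int[OF assms(1)]] by simp
qed

lemma rat_cong0_of_nat_cong:
  "prime p \<Longrightarrow> [a = b] (mod p) \<Longrightarrow> rat_cong0 (of_nat a - of_nat b) p"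
  using rat_cong0_of_int_cong[of p "int a" "int b"] by (simp add: cong_int_iff)

section \<open>Bernoulli numbers and Faulhaber polynomials\<close>

abbreviation bernoulli_fps :: "rat fps" where
  "bernoulli_fps \<equiv> fps_X / (fps_exp 1 - 1)"

lemma fps_exp_minus_one_neq_0: "fps_exp (1 :: 'a :: field_char_0) - 1 \<noteq> 0"
proof
  assume "fps_exp (1 :: 'a) - 1 = 0"
  then have "(fps_exp (1 :: 'a) - 1) $ 1 = 0" by simp
  then show False by simp
qed

lemma bernoulli_fps_times: "bernoulli_fps * (fps_exp 1 - 1) = fps_X"
proof (rule fps_times_divide_eq[OF fps_exp_minus_one_neq_0])
  have "subdegree (fps_exp (1 :: rat) - 1) = 1" by (rule subdegreeI) auto
  then show "subdegree (fps_exp (1 :: rat) - 1) \<le> subdegree (fps_X :: rat fps)" by simp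
qed

lemma fps_X_times_sum_fps_exp:
  "fps_X * (\<Sum>j<x. fps_exp (of_nat j)) = bernoulli_fps * (fps_exp (of_nat x) - 1)"
proof -
  have geometric: "(\<Sum>j<x. fps_exp (of_nat j)) * (fps_exp 1 - 1) = fps_exp (of_nat x) - (1 :: rat fps)"
    by (induction x) (simp_all add: algebra_simps flip: fps_exp_add_mult)
  have "(fps_X * (\<Sum>j<x. fps_exp (of_nat j))) * (fps_exp 1 - 1) = (fps_X :: rat fps) * (fps_exp (of_nat x) - 1)"
    by (simp only: mult.assoc geometric)
  also have "\<dots> = (bernoulli_fps * (fps_exp 1 - 1)) * (fps_exp (of_nat x) - 1)"
    by (simp only: bernoulli_fps_times)
  also have "\<dots> = (bernoulli_fps * (fps_exp (of_nat x) - 1)) * (fps_exp 1 - 1)"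
    by (simp only: mult.assoc mult.commute[of "fps_exp 1 - 1"])
  finally show ?thesis using fps_exp_minus_one_neq_0 by simp
qed

definition faulhaber_coeff :: "nat \<Rightarrow> nat \<Rightarrow> rat" where
  "faulhaber_coeff m a = of_nat ((m + 1) choose a) * bernoulli a / of_nat (m + 1)"

lemma faulhaber_coeff_conv_fps:
  assumes "a \<le> m + 1"
  shows "faulhaber_coeff m a = fact m * bernoulli_fps $ a / fact (m + 1 - a)"
proof -
  have "of_nat ((m + 1) choose a) = (fact (m + 1) / (fact a * fact (m + 1 - a)) :: rat)"
    using assms by (rule binomial_fact)
  also have "\<dots> = of_nat (m + 1) * fact m / (fact a * fact (m + 1 - a))"
    by (simp del: of_nat_Suc)
  finally show ?thesis
    unfolding faulhaber_coeff_def bernoulli_def by (simp del: of_nat_Suc)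
qed

theorem sum_of_powers_faulhaber:
  "(\<Sum>j<x. of_nat j ^ m :: rat) = (\<Sum>a\<le>m. faulhaber_coeff m a * of_nat x ^ (m + 1 - a))"
proof -
  have "(\<Sum>j<x. of_nat j ^ m :: rat) / fact m = (fps_X * (\<Sum>j<x. fps_exp (of_nat j))) $ Suc m"
    by (simp add: fps_sum_nth sum_divide_distrib)
  also have "\<dots> = (bernoulli_fps * (fps_exp (of_nat x) - 1)) $ Suc m"
    by (simp only: fps_X_times_sum_fps_exp)
  also have "\<dots> = (\<Sum>a\<le>m. bernoulli_fps $ a * of_nat x ^ (Suc m - a) / fact (Suc m - a))"
    by (simp add: fps_mult_nth atMost_atLeast0 del: sum.atMost_Suc)
  also have "\<dots> = (\<Sum>a\<le>m. faulhaber_coeff m a * of_nat x ^ (m + 1 - a)) / fact m"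
    unfolding sum_divide_distrib by (intro sum.cong) (simp_all add: faulhaber_coeff_conv_fps)
  finally show ?thesis by simp
qed

lemma bernoulli_0: "bernoulli 0 = 1"
  using sum_of_powers_faulhaber[where x = 1 and m = 0] by (simp add: faulhaber_coeff_def)

lemma bernoulli_eq_minus_sum_faulhaber_coeff:
  assumes "m \<ge> 1"
  shows "bernoulli m = - (\<Sum>a<m. faulhaber_coeff m a)"
proof -
  have "(\<Sum>a<m. faulhaber_coeff m a) + faulhaber_coeff m m = (\<Sum>a\<le>m. faulhaber_coeff m a)"
    using sum.lessThan_Suc[of "faulhaber_coeff m" m] by (simp only: lessThan_Suc_atMost)
  also have "\<dots> = (\<Sum>j<1. of_nat j ^ m :: rat)"
    using sum_of_powers_faulhaber[where x = 1 and m = m] by simp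
  also have "\<dots> = 0" using assms by simp
  finally show ?thesis
    unfolding faulhaber_coeff_def by (simp add: add_eq_0_iff)
qed

lemma bernoulli_odd_eq_0:
  assumes "odd m" "m \<noteq> 1"
  shows "bernoulli m = 0"
proof -
  define \<beta>' where "\<beta>' = bernoulli_fps oo - fps_X"
  have reflected: "\<beta>' * (fps_exp (- 1) - 1) = - fps_X"
    using arg_cong[OF bernoulli_fps_times, of "\<lambda>f. f oo - fps_X"] unfolding \<beta>'_def
    by (simp add: fps_compose_mult_distrib fps_compose_sub_distrib)
  have "\<beta>' * (fps_exp 1 - 1) = \<beta>' * (fps_exp (- 1) - 1) * - fps_exp 1"
    by (simp add: algebra_simps flip: fps_exp_add_mult)
  also have "\<dots> = fps_X * (fps_exp 1 - 1) + fps_X"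
    unfolding reflected by (simp add: algebra_simps)
  also have "\<dots> = (fps_X + bernoulli_fps) * (fps_exp 1 - 1)"
    by (simp add: distrib_right bernoulli_fps_times)
  finally have "\<beta>' = fps_X + bernoulli_fps"
    using fps_exp_minus_one_neq_0 by simp
  then have "\<beta>' $ m = (fps_X + bernoulli_fps) $ m" by simp
  with assms have "bernoulli_fps $ m = 0"
    unfolding \<beta>'_def by (simp add: fps_compose_uminus')
  then show ?thesis unfolding bernoulli_def by simp
qed

lemma bernoulli_p_integral:
  assumes "prime p" "m + 2 \<le> p"
  shows "p_integral (bernoulli m) p"
  using assms(2)
proof (induction m rule: less_induct)
  case (less m)
  show ?case
  proof (cases "m = 0")
    case True
    then show ?thesis by (simp add: bernoulli_0 p_integral_1 assms(1))
  next
    case False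
    have "\<not> p dvd m + 1" using less.prems by (auto dest: dvd_imp_le)
    then have "p_integral (faulhaber_coeff m a) p" if "a < m" for a
      unfolding faulhaber_coeff_def using that less
      by (intro p_integral_divide_of_nat p_integral_mult p_integral_of_nat assms(1)) auto
    moreover have "bernoulli m = - (\<Sum>a<m. faulhaber_coeff m a)"
      using False by (simp add: bernoulli_eq_minus_sum_faulhaber_coeff)
    ultimately show ?thesis
      using assms(1) by (auto intro: p_integral_minus p_integral_sum)
  qed
qed

lemma p_integral_faulhaber_coeff:
  assumes "prime p" "m + 2 \<le> p" "a \<le> m"
  shows "p_integral (faulhaber_coeff m a) p"
proof -
  have "\<not> p dvd m + 1" using assms(2) by (auto dest: dvd_imp_le)
  then show ?thesis
    unfolding faulhaber_coeff_def using assms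
    by (intro p_integral_divide_of_nat p_integral_mult p_integral_of_nat bernoulli_p_integral) auto
qed

lemma faulhaber_coeff_Suc:
  "of_nat (m + 2 - a) * faulhaber_coeff (m + 1) a = of_nat (m + 1) * faulhaber_coeff m a"
proof -
  have "(m + 2 - a) * ((m + 2) choose a) = (m + 2) * ((m + 1) choose a)"
    using binomial_absorb_comp[of "m + 2" a] by simp
  then have "of_nat (m + 2 - a) * of_nat ((m + 2) choose a) = (of_nat (m + 2) * of_nat ((m + 1) choose a) :: rat)"
    by (metis of_nat_mult)
  then show ?thesis
    unfolding faulhaber_coeff_def by (simp add: field_simps del: of_nat_Suc of_nat_add)
qed

definition faulhaber_poly :: "nat \<Rightarrow> rat poly" where
  "faulhaber_poly m = (\<Sum>a\<le>m. monom (faulhaber_coeff m a) (m + 1 - a))"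

lemma poly_faulhaber_poly: "poly (faulhaber_poly m) (of_nat x) = (\<Sum>j<x. of_nat j ^ m)"
  unfolding faulhaber_poly_def sum_of_powers_faulhaber by (simp add: poly_sum poly_monom)

lemma coeff_faulhaber_poly:
  "coeff (faulhaber_poly m) d = (if 1 \<le> d \<and> d \<le> m + 1 then faulhaber_coeff m (m + 1 - d) else 0)"
proof -
  have "coeff (faulhaber_poly m) d = (\<Sum>a\<le>m. if a = m + 1 - d \<and> 1 \<le> d \<and> d \<le> m + 1 then faulhaber_coeff m a else 0)"
    unfolding faulhaber_poly_def coeff_sum coeff_monom by (intro sum.cong) auto
  then show ?thesis by auto
qed

lemma degree_faulhaber_poly: "degree (faulhaber_poly m) \<le> m + 1"
  by (rule degree_le) (simp add: coeff_faulhaber_poly)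

lemma p_integral_coeff_faulhaber_poly:
  "prime p \<Longrightarrow> m + 2 \<le> p \<Longrightarrow> p_integral (coeff (faulhaber_poly m) d) p"
  unfolding coeff_faulhaber_poly by (auto intro: p_integral_faulhaber_coeff p_integral_0)

lemma pderiv_faulhaber_poly:
  "pderiv (faulhaber_poly (m + 1)) = smult (of_nat (m + 1)) (faulhaber_poly m) + [:bernoulli (m + 1):]"
proof (rule poly_eqI)
  fix e
  consider "e = 0" | "1 \<le> e" "e \<le> m + 1" | "e > m + 1" by linarith
  then show "coeff (pderiv (faulhaber_poly (m + 1))) e =
      coeff (smult (of_nat (m + 1)) (faulhaber_poly m) + [:bernoulli (m + 1):]) e"
  proof cases
    case 1
    then show ?thesis by (simp add: coeff_pderiv coeff_faulhaber_poly faulhaber_coeff_def)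
  next
    case 2
    then have "of_nat (Suc e) * faulhaber_coeff (m + 1) (m + 1 - e) = of_nat (m + 1) * faulhaber_coeff m (m + 1 - e)"
      using faulhaber_coeff_Suc[of m "m + 1 - e"] by simp
    with 2 show ?thesis by (simp add: coeff_pderiv coeff_faulhaber_poly coeff_pCons split: nat.split)
  next
    case 3
    then show ?thesis by (simp add: coeff_pderiv coeff_faulhaber_poly coeff_pCons split: nat.split)
  qed
qed

lemma coeff_faulhaber_poly_mult:
  assumes "N \<le> m1" "N \<le> m2"
  shows "coeff (faulhaber_poly m1 * faulhaber_poly m2) (m1 + m2 + 2 - N) =
    (\<Sum>a\<le>N. faulhaber_coeff m1 a * faulhaber_coeff m2 (N - a))"
proof -
  have "coeff (faulhaber_poly m1 * faulhaber_poly m2) (m1 + m2 + 2 - N) =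
      (\<Sum>a\<le>m1. \<Sum>b\<le>m2. if b = N - a \<and> a \<le> N then faulhaber_coeff m1 a * faulhaber_coeff m2 b else 0)"
    unfolding faulhaber_poly_def sum_product mult_monom coeff_sum coeff_monom
    using assms by (intro sum.cong refl) auto
  also have "\<dots> = (\<Sum>a\<le>m1. if a \<le> N then faulhaber_coeff m1 a * faulhaber_coeff m2 (N - a) else 0)"
    using assms by (intro sum.cong refl) auto
  also have "\<dots> = (\<Sum>a\<le>N. faulhaber_coeff m1 a * faulhaber_coeff m2 (N - a))"
    using assms by (simp add: sum.If_cases Int_absorb1 flip: atMost_def)
  finally show ?thesis .
qed

section \<open>Power sums modulo p\<close>

lemma sum_of_powers_mod_prime_small:
  assumes "prime p" "r + 2 \<le> p"
  shows "rat_cong0 (\<Sum>x<p. of_nat x ^ r) p"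
proof -
  have "(\<Sum>x<p. of_nat x ^ r) = of_nat p * (\<Sum>a\<le>r. faulhaber_coeff r a * of_nat p ^ (r - a))"
    unfolding sum_of_powers_faulhaber sum_distrib_left
    by (intro sum.cong refl) (simp add: Suc_diff_le)
  also have "rat_cong0 \<dots> p"
    using assms
    by (intro rat_cong0_of_nat_mult p_integral_sum p_integral_mult p_integral_power
        p_integral_of_nat p_integral_faulhaber_coeff) auto
  finally show ?thesis .
qed

lemma sum_of_powers_cong_mod_prime:
  assumes "prime p" "0 < e"
  shows "[\<Sum>x<p. x ^ e = \<Sum>x<p. if x = 0 then 0 else x ^ (e mod (p - 1))] (mod p)"
proof (rule cong_sum)
  fix x assume "x \<in> {..<p}"
  then have "x = 0 \<or> \<not> p dvd x" by (auto dest: dvd_imp_le)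
  moreover have "[x ^ e = x ^ (e mod (p - 1))] (mod p)" if "\<not> p dvd x"
  proof -
    have "[x ^ e = (x ^ (p - 1)) ^ (e div (p - 1)) * x ^ (e mod (p - 1))] (mod p)"
      by (simp flip: power_mult power_add)
    also have "[(x ^ (p - 1)) ^ (e div (p - 1)) * x ^ (e mod (p - 1))
        = 1 ^ (e div (p - 1)) * x ^ (e mod (p - 1))] (mod p)"
      using assms(1) that by (intro cong_mult cong_pow fermat_theorem cong_refl)
    finally show ?thesis by simp
  qed
  ultimately show "[x ^ e = (if x = 0 then 0 else x ^ (e mod (p - 1)))] (mod p)"
    using assms(2) by (auto simp: power_0_left)
qed

theorem sum_of_powers_mod_prime:
  assumes "prime p"
  shows "rat_cong0 ((\<Sum>x<p. of_nat x ^ e) + (if 0 < e \<and> (p - 1) dvd e then 1 else 0)) p"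
proof -
  have p: "p \<ge> 2" using prime_ge_2_nat[OF assms] .
  consider "e = 0" | "0 < e" "(p - 1) dvd e" | "0 < e" "\<not> (p - 1) dvd e" by blast
  then show ?thesis
  proof cases
    case 1
    then show ?thesis using sum_of_powers_mod_prime_small[OF assms, of 0] p by simp
  next
    case 2
    then have "e mod (p - 1) = 0" by (blast intro: dvd_imp_mod_0)
    then have "[\<Sum>x<p. x ^ e = \<Sum>x<p. if x = 0 then 0 else 1] (mod p)"
      using sum_of_powers_cong_mod_prime[OF assms 2(1)] by (simp cong: if_cong)
    also have "(\<Sum>x<p. if x = 0 then 0 else 1 :: nat) = p - 1"
      by (cases p) (simp_all add: sum.lessThan_Suc_shift del: sum.lessThan_Suc)
    finally have "rat_cong0 (of_nat (\<Sum>x<p. x ^ e) - of_nat (p - 1)) p"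
      by (rule rat_cong0_of_nat_cong[OF assms])
    then have "rat_cong0 (of_nat (\<Sum>x<p. x ^ e) - of_nat (p - 1) + of_nat p) p"
      by (intro rat_cong0_add assms rat_cong0_of_nat_mult[where r = 1, simplified] p_integral_1)
    then show ?thesis using 2 p by (simp add: of_nat_diff)
  next
    case 3
    have "e mod (p - 1) < p - 1" using p by simp
    with 3 have r: "0 < e mod (p - 1)" "e mod (p - 1) + 2 \<le> p"
      by (auto simp: dvd_eq_mod_eq_0)
    have "(\<Sum>x<p. if x = 0 then 0 else x ^ (e mod (p - 1))) = (\<Sum>x<p. x ^ (e mod (p - 1)))"
      using r(1) by (intro sum.cong refl) (simp add: power_0_left)
    with sum_of_powers_cong_mod_prime[OF assms 3(1)]
    have "[\<Sum>x<p. x ^ e = \<Sum>x<p. x ^ (e mod (p - 1))] (mod p)" by simp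
    then have "rat_cong0 (of_nat (\<Sum>x<p. x ^ e) - of_nat (\<Sum>x<p. x ^ (e mod (p - 1)))) p"
      by (rule rat_cong0_of_nat_cong[OF assms])
    from rat_cong0_add[OF assms this sum_of_powers_mod_prime_small[OF assms r(2)]]
    show ?thesis using 3 by simp
  qed
qed

lemma dvd_iff_eq_or_eq_double:
  fixes d t :: nat
  assumes "0 < t" "t < 3 * d"
  shows "d dvd t \<longleftrightarrow> t = d \<or> t = 2 * d"
proof
  assume "d dvd t"
  then obtain k where "t = d * k" by blast
  with assms have "0 < k" "k < 3" by auto
  then have "k = 1 \<or> k = 2" by auto
  with \<open>t = d * k\<close> show "t = d \<or> t = 2 * d" by auto
qed auto

theorem sum_power_times_poly_mod_prime:
  fixes Q :: "rat poly"
  assumes p: "prime p" and coeffs: "\<And>i. p_integral (coeff Q i) p"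
    and r: "0 < r" "r \<le> 2 * (p - 1)" "r + degree Q < 3 * (p - 1)"
  shows "rat_cong0 ((\<Sum>x<p. of_nat x ^ r * poly Q (of_nat x))
    + (if r \<le> p - 1 then coeff Q (p - 1 - r) else 0) + coeff Q (2 * (p - 1) - r)) p"
proof -
  let ?D = "degree Q" and ?d = "p - 1"
  let ?\<delta> = "\<lambda>i. if 0 < r + i \<and> ?d dvd r + i then 1 else 0 :: rat"
  have "(\<Sum>x<p. of_nat x ^ r * poly Q (of_nat x)) = (\<Sum>i\<le>?D. coeff Q i * (\<Sum>x<p. of_nat x ^ (r + i)))"
    by (simp add: poly_altdef sum_distrib_left power_add ac_simps sum.swap[of _ "{..<p}"])
  then have "(\<Sum>x<p. of_nat x ^ r * poly Q (of_nat x)) + (\<Sum>i\<le>?D. coeff Q i * ?\<delta> i)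
      = (\<Sum>i\<le>?D. coeff Q i * ((\<Sum>x<p. of_nat x ^ (r + i)) + ?\<delta> i))"
    by (simp add: sum.distrib distrib_left)
  moreover have "rat_cong0 \<dots> p"
    using p coeffs by (intro rat_cong0_sum rat_cong0_mult_left sum_of_powers_mod_prime)
  moreover have "(\<Sum>i\<le>?D. coeff Q i * ?\<delta> i) = (\<Sum>i\<le>?D. (if i = ?d - r \<and> r \<le> ?d then coeff Q i else 0)
      + (if i = 2 * ?d - r then coeff Q i else 0))"
    using r by (intro sum.cong refl) (auto simp: dvd_iff_eq_or_eq_double)
  moreover have "\<dots> = (if r \<le> ?d then coeff Q (?d - r) else 0) + coeff Q (2 * ?d - r)"
    by (auto simp: sum.distrib coeff_eq_0 not_le)
  ultimately show ?thesis by (simp add: add.assoc)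
qed

lemma p_integral_coeff_mult:
  assumes "prime p" "\<And>i. p_integral (coeff P i) p" "\<And>i. p_integral (coeff Q i) p"
  shows "p_integral (coeff (P * Q) k) p"
  unfolding coeff_mult using assms by (intro p_integral_sum p_integral_mult)

section \<open>Coefficients of products of Faulhaber polynomials modulo p\<close>

lemma sum_square_times_telescope:
  fixes f g u v :: "nat \<Rightarrow> 'a :: comm_ring_1"
  assumes "\<And>x. f (Suc x) = f x + u x" "\<And>x. g (Suc x) = g x + v x"
  shows "f n ^ 2 * g n - f 0 ^ 2 * g 0 = (\<Sum>x<n. 2 * (u x * (f x * g x)) + u x ^ 2 * g x
    + v x * f x ^ 2 + 2 * (u x * v x * f x) + u x ^ 2 * v x)"
proof -
  have "f n ^ 2 * g n - f 0 ^ 2 * g 0 = (\<Sum>x<n. f (Suc x) ^ 2 * g (Suc x) - f x ^ 2 * g x)"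
    by (rule sum_lessThan_telescope[symmetric])
  also have "\<dots> = (\<Sum>x<n. 2 * (u x * (f x * g x)) + u x ^ 2 * g x
      + v x * f x ^ 2 + 2 * (u x * v x * f x) + u x ^ 2 * v x)"
    by (intro sum.cong refl) (simp add: assms algebra_simps power2_eq_square)
  finally show ?thesis .
qed

lemma faulhaber_square_telescope:
  fixes q :: nat
  defines "F \<equiv> faulhaber_poly (q + 1)" and "G \<equiv> faulhaber_poly q"
  shows "poly F (of_nat n) ^ 2 * poly G (of_nat n) = (\<Sum>x<n. 2 * (of_nat x ^ (q + 1) * poly (F * G) (of_nat x))
    + of_nat x ^ (2 * q + 2) * poly G (of_nat x) + of_nat x ^ q * poly (F ^ 2) (of_nat x)
    + 2 * (of_nat x ^ (2 * q + 1) * poly F (of_nat x)) + of_nat x ^ (3 * q + 2))"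
proof -
  have "poly F (of_nat n) ^ 2 * poly G (of_nat n) - poly F (of_nat 0) ^ 2 * poly G (of_nat 0)
      = (\<Sum>x<n. 2 * (of_nat x ^ (q + 1) * (poly F (of_nat x) * poly G (of_nat x)))
        + (of_nat x ^ (q + 1)) ^ 2 * poly G (of_nat x) + of_nat x ^ q * poly F (of_nat x) ^ 2
        + 2 * (of_nat x ^ (q + 1) * of_nat x ^ q * poly F (of_nat x)) + (of_nat x ^ (q + 1)) ^ 2 * of_nat x ^ q)"
    by (rule sum_square_times_telescope) (simp_all add: F_def G_def poly_faulhaber_poly del: of_nat_Suc)
  moreover have "poly F (of_nat 0) = 0"
    unfolding F_def poly_faulhaber_poly by simp
  moreover have "(y ^ (q + 1)) ^ 2 = y ^ (2 * q + 2)" "y ^ (q + 1) * y ^ q = y ^ (2 * q + 1)"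
    "y ^ (2 * q + 2) * y ^ q = y ^ (3 * q + 2)" for y :: rat
    by (simp_all only: power_mult[symmetric] power_add[symmetric]) (intro arg_cong[where f = "power y"]; simp)+
  ultimately show ?thesis
    by (simp only: poly_mult poly_power power_zero_numeral mult_zero_left diff_zero)
qed

lemma faulhaber_square_at_prime_cong:
  assumes p: "prime p" and "q + 3 \<le> p"
  shows "rat_cong0 (poly (faulhaber_poly (q + 1)) (of_nat p) ^ 2 * poly (faulhaber_poly q) (of_nat p)) p"
proof -
  have "\<not> (p - 1) dvd q + 1" using assms(2) by (intro nat_dvd_not_less) auto
  then have "rat_cong0 (poly (faulhaber_poly (q + 1)) (of_nat p)) p"
    using sum_of_powers_mod_prime[OF p, of "q + 1"] by (simp add: poly_faulhaber_poly)
  moreover have "p_integral (poly (faulhaber_poly (q + 1)) (of_nat p) * poly (faulhaber_poly q) (of_nat p)) p"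
    unfolding poly_faulhaber_poly using p
    by (intro p_integral_mult p_integral_sum p_integral_power p_integral_of_nat)
  ultimately show ?thesis
    using p by (simp add: power2_eq_square mult.assoc rat_cong0_mult)
qed

lemma faulhaber_power_sums_cong:
  fixes n p q :: nat
  assumes "even n" and p: "prime p" and "p \<ge> 3 * n + 7" and q: "q + n + 3 = p"
  defines "F \<equiv> faulhaber_poly (q + 1)" and "G \<equiv> faulhaber_poly q"
  shows "rat_cong0 ((\<Sum>x<p. 2 * (of_nat x ^ (q + 1) * poly (F * G) (of_nat x))
    + of_nat x ^ (2 * q + 2) * poly G (of_nat x) + of_nat x ^ q * poly (F ^ 2) (of_nat x)
    + 2 * (of_nat x ^ (2 * q + 1) * poly F (of_nat x)) + of_nat x ^ (3 * q + 2))
    + (2 * (coeff (F * G) (n + 1) + coeff (F * G) (p + n))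
    + (coeff (F ^ 2) (n + 2) + coeff (F ^ 2) (p + n + 1)))) p"
proof -
  define S :: "nat \<Rightarrow> rat poly \<Rightarrow> rat" where "S r Q = (\<Sum>x<p. of_nat x ^ r * poly Q (of_nat x))" for r Q
  have "q \<ge> 2 * n + 4" using assms by linarith
  have coeffs_F: "p_integral (coeff F i) p" and coeffs_G: "p_integral (coeff G i) p" for i
    unfolding F_def G_def using p q by (auto intro: p_integral_coeff_faulhaber_poly)
  have "degree F \<le> q + 2" "degree G \<le> q + 1"
    unfolding F_def G_def using degree_faulhaber_poly[of "q + 1"] degree_faulhaber_poly[of q] by simp_all
  then have "degree (F * G) \<le> 2 * q + 3" "degree (F ^ 2) \<le> 2 * q + 4"
    using degree_mult_le[of F G] degree_power_le[of F 2] by simp_all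
  have "bernoulli (q - 2 * n - 1) = 0"
    using assms prime_odd_nat[OF p] \<open>q \<ge> 2 * n + 4\<close> by (intro bernoulli_odd_eq_0) auto
  then have vanishing: "coeff G (2 * n + 2) = 0" "coeff F (2 * n + 3) = 0"
    unfolding F_def G_def using \<open>q \<ge> 2 * n + 4\<close>
    by (simp_all add: coeff_faulhaber_poly faulhaber_coeff_def)
  have FG_sum: "rat_cong0 (S (q + 1) (F * G) + coeff (F * G) (n + 1) + coeff (F * G) (p + n)) p"
    using sum_power_times_poly_mod_prime[OF p p_integral_coeff_mult[OF p coeffs_F coeffs_G], of "q + 1"]
      \<open>degree (F * G) \<le> 2 * q + 3\<close> by (simp add: S_def add_ac flip: q)
  have G_sum: "rat_cong0 (S (2 * q + 2) G) p"
    using sum_power_times_poly_mod_prime[OF p coeffs_G, of "2 * q + 2"]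
      \<open>degree G \<le> q + 1\<close> \<open>q \<ge> 2 * n + 4\<close> vanishing by (simp add: S_def add_ac flip: q)
  have F_square_sum: "rat_cong0 (S q (F ^ 2) + coeff (F ^ 2) (n + 2) + coeff (F ^ 2) (p + n + 1)) p"
    using sum_power_times_poly_mod_prime[OF p p_integral_coeff_mult[OF p coeffs_F coeffs_F], of q]
      \<open>degree (F ^ 2) \<le> 2 * q + 4\<close> \<open>q \<ge> 2 * n + 4\<close> by (simp add: S_def add_ac power2_eq_square flip: q)
  have F_sum: "rat_cong0 (S (2 * q + 1) F) p"
    using sum_power_times_poly_mod_prime[OF p coeffs_F, of "2 * q + 1"]
      \<open>degree F \<le> q + 2\<close> \<open>q \<ge> 2 * n + 4\<close> vanishing by (simp add: S_def add_ac flip: q)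
  have power_sum: "rat_cong0 (\<Sum>x<p. of_nat x ^ (3 * q + 2)) p"
    using sum_of_powers_mod_prime[OF p, of "3 * q + 2"] dvd_iff_eq_or_eq_double[of "3 * q + 2" "p - 1"]
      \<open>q \<ge> 2 * n + 4\<close> by (simp flip: q)
  have two: "p_integral 2 p" using p_integral_of_nat[OF p, of 2] by simp
  have "rat_cong0 (2 * (S (q + 1) (F * G) + coeff (F * G) (n + 1) + coeff (F * G) (p + n))
      + S (2 * q + 2) G + (S q (F ^ 2) + coeff (F ^ 2) (n + 2) + coeff (F ^ 2) (p + n + 1))
      + 2 * S (2 * q + 1) F + (\<Sum>x<p. of_nat x ^ (3 * q + 2))) p"
    by (intro rat_cong0_add[OF p] rat_cong0_mult_left[OF p two] FG_sum G_sum F_square_sum F_sum power_sum)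
  then show ?thesis
    unfolding S_def by (simp add: sum.distrib sum_distrib_left algebra_simps)
qed

lemma faulhaber_square_coeff_cong:
  fixes n p q :: nat
  assumes "even n" and p: "prime p" and "p \<ge> 3 * n + 7" and q: "q + n + 3 = p"
  defines "F \<equiv> faulhaber_poly (q + 1)" and "G \<equiv> faulhaber_poly q"
  shows "rat_cong0 (2 * (coeff (F * G) (n + 1) + coeff (F * G) (p + n))
    + (coeff (F ^ 2) (n + 2) + coeff (F ^ 2) (p + n + 1))) p"
proof -
  have "rat_cong0 (poly F (of_nat p) ^ 2 * poly G (of_nat p)) p"
    unfolding F_def G_def using q by (intro faulhaber_square_at_prime_cong p) auto
  from rat_cong0_diff[OF p faulhaber_power_sums_cong[OF assms(1-4)] this[unfolded F_def G_def faulhaber_square_telescope]]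
  show ?thesis
    unfolding F_def G_def by simp
qed

lemma coeff_faulhaber_square_Suc:
  assumes "bernoulli (q + 1) = 0"
  defines "F \<equiv> faulhaber_poly (q + 1)" and "G \<equiv> faulhaber_poly q"
  shows "of_nat (Suc j) * coeff (F ^ 2) (Suc j) = 2 * of_nat (q + 1) * coeff (F * G) j"
proof -
  have "pderiv F = smult (of_nat (q + 1)) G"
    unfolding F_def G_def pderiv_faulhaber_poly using assms by simp
  then have "pderiv (F ^ 2) = smult (of_nat (q + 1)) (F * G) + smult (of_nat (q + 1)) (F * G)"
    by (simp add: power2_eq_square pderiv_mult mult.commute)
  then have "pderiv (F ^ 2) = smult (2 * of_nat (q + 1)) (F * G)"
    by (metis smult_add_left mult_2)
  then show ?thesis
    by (metis coeff_pderiv coeff_smult)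
qed

lemma faulhaber_top_coeffs_cong:
  fixes n p q :: nat
  assumes "even n" and p: "prime p" and "p \<ge> 3 * n + 7" and q: "q + n + 3 = p"
  defines "F \<equiv> faulhaber_poly (q + 1)" and "G \<equiv> faulhaber_poly q"
  shows "rat_cong0 (coeff (F ^ 2) (p + n + 1)) p \<and> rat_cong0 (coeff (F * G) (p + n)) p"
proof -
  define a1 a2 c1 c2 where "a1 = coeff (F * G) (n + 1)" and "a2 = coeff (F * G) (p + n)"
    and "c1 = coeff (F ^ 2) (n + 2)" and "c2 = coeff (F ^ 2) (p + n + 1)"
  have relation: "rat_cong0 (2 * (a1 + a2) + (c1 + c2)) p"
    unfolding a1_def a2_def c1_def c2_def F_def G_def by (rule faulhaber_square_coeff_cong[OF assms(1-4)])
  have "odd (q + 1)" using prime_odd_nat[OF p] assms by auto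
  then have "bernoulli (q + 1) = 0" using assms by (intro bernoulli_odd_eq_0) auto
  then have a1: "2 * of_nat (q + 1) * a1 = of_nat (n + 2) * c1"
    and a2: "2 * of_nat (q + 1) * a2 = of_nat (p + n + 1) * c2"
    unfolding a1_def a2_def c1_def c2_def F_def G_def
    using coeff_faulhaber_square_Suc[of q "n + 1"] coeff_faulhaber_square_Suc[of q "p + n"] by simp_all
  have "of_nat (2 * p - 1) * c2 = of_nat (q + 1) * (2 * (a1 + a2) + (c1 + c2)) - of_nat p * c1"
  proof -
    have "(of_nat p :: rat) = of_nat q + of_nat n + 3" by (simp flip: q)
    then show ?thesis
      using a1 a2 prime_gt_0_nat[OF p] by (simp add: of_nat_diff algebra_simps)
  qed
  moreover have "rat_cong0 (of_nat (q + 1) * (2 * (a1 + a2) + (c1 + c2)) - of_nat p * c1) p"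
  proof (rule rat_cong0_diff[OF p rat_cong0_mult_left[OF p p_integral_of_nat[OF p] relation] rat_cong0_of_nat_mult])
    show "p_integral c1 p"
      unfolding c1_def F_def power2_eq_square using p q
      by (intro p_integral_coeff_mult p_integral_coeff_faulhaber_poly) auto
  qed
  moreover have "\<not> p dvd 2 * p - 1"
    using prime_gt_1_nat[OF p] dvd_diff_nat[of p "2 * p" "2 * p - 1"] by auto
  ultimately have c2: "rat_cong0 c2 p"
    using p by (metis rat_cong0_cancel_of_nat)
  have "\<not> p dvd 2" "\<not> p dvd q + 1"
    using q assms by (auto dest: dvd_imp_le)
  then have "\<not> p dvd 2 * (q + 1)"
    using p by (metis prime_dvd_mult_iff)
  moreover have "rat_cong0 (of_nat (2 * (q + 1)) * a2) p"
    using a2 rat_cong0_mult_left[OF p p_integral_of_nat[OF p] c2, of "p + n + 1"] by simp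
  ultimately show ?thesis
    using c2 p unfolding a2_def c2_def by (metis rat_cong0_cancel_of_nat)
qed

lemma faulhaber_convolution_cong:
  fixes n p q :: nat
  assumes "even n" and "prime p" and "p \<ge> 3 * n + 7" and q: "q + n + 3 = p"
  defines "N \<equiv> p - 3 * n - 3"
  shows "rat_cong0 (\<Sum>a\<le>N. faulhaber_coeff q a * faulhaber_coeff (q + 1) (N - a)) p"
    and "rat_cong0 (\<Sum>a\<le>N. faulhaber_coeff (q + 1) a * faulhaber_coeff (q + 1) (N - a)) p"
proof -
  have "N \<le> q" "N \<le> q + 1" "q + (q + 1) + 2 - N = p + n" "q + 1 + (q + 1) + 2 - N = p + n + 1"
    using q assms(3) by (auto simp: N_def)
  then show "rat_cong0 (\<Sum>a\<le>N. faulhaber_coeff q a * faulhaber_coeff (q + 1) (N - a)) p"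
    and "rat_cong0 (\<Sum>a\<le>N. faulhaber_coeff (q + 1) a * faulhaber_coeff (q + 1) (N - a)) p"
    using faulhaber_top_coeffs_cong[OF assms(1-3) q]
      coeff_faulhaber_poly_mult[of N q "q + 1"] coeff_faulhaber_poly_mult[of N "q + 1" "q + 1"]
    by (simp_all add: power2_eq_square mult.commute)
qed

section \<open>The Bernoulli terms modulo p\<close>

lemma binomial_reflect_cong:
  assumes p: "prime p" and "u + v < p"
  shows "[int ((p - 1 - u) choose v) = (-1) ^ v * int ((u + v) choose v)] (mod int p)"
  using assms(2)
proof (induction v)
  case 0
  then show ?case by simp
next
  case (Suc v)
  let ?N = "p - 1 - u"
  have "Suc v * (?N choose Suc v) = (?N - v) * (?N choose v)"
    using binomial_absorption[of v ?N] binomial_absorb_comp[of ?N v] by simp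
  then have "[int (Suc v) * int (?N choose Suc v) = int (?N - v) * int (?N choose v)] (mod int p)"
    by (metis of_nat_mult cong_refl)
  also have "[int (?N - v) * int (?N choose v) = - int (u + Suc v) * ((-1) ^ v * int ((u + v) choose v))] (mod int p)"
  proof (rule cong_mult)
    have "int (?N - v) = - int (u + Suc v) + int p" using Suc.prems by simp
    then show "[int (?N - v) = - int (u + Suc v)] (mod int p)"
      by (simp add: cong_iff_dvd_diff)
    show "[int (?N choose v) = (-1) ^ v * int ((u + v) choose v)] (mod int p)"
      using Suc by simp
  qed
  also have "- int (u + Suc v) * ((-1) ^ v * int ((u + v) choose v))
      = int (Suc v) * ((-1) ^ Suc v * int ((u + Suc v) choose Suc v))"
  proof -
    define X Y where "X = int ((u + v) choose v)" and "Y = int ((u + Suc v) choose Suc v)"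
    have "int (Suc v) * Y = int (u + Suc v) * X"
      unfolding X_def Y_def using Suc_times_binomial[of v "u + v"] by (metis of_nat_mult add_Suc_right)
    then have "(-1) ^ v * (int (Suc v) * Y) = (-1) ^ v * (int (u + Suc v) * X)" by simp
    then have "- int (u + Suc v) * ((-1) ^ v * X) = int (Suc v) * ((-1) ^ Suc v * Y)"
      by (simp add: algebra_simps)
    then show ?thesis unfolding X_def Y_def .
  qed
  finally have "[int (Suc v) * int (?N choose Suc v)
      = int (Suc v) * ((-1) ^ Suc v * int ((u + Suc v) choose Suc v))] (mod int p)" .
  moreover have "\<not> p dvd Suc v"
    using Suc.prems by (auto dest: dvd_imp_le)
  then have "coprime (Suc v) p"
    using prime_imp_coprime[OF p] coprime_commute by blast
  then have "coprime (int (Suc v)) (int p)"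
    by (simp only: coprime_int_iff)
  ultimately show ?case
    using cong_mult_lcancel by blast
qed

lemma binomial_swap_cong:
  assumes p: "prime p" and "b + v < p"
  shows "[int ((p - 1 - b) choose v) = (-1) ^ v * (-1) ^ b * int ((p - 1 - v) choose b)] (mod int p)"
proof -
  have "[(-1) ^ v * (-1) ^ b * int ((p - 1 - v) choose b) = (-1) ^ v * (-1) ^ b * ((-1) ^ b * int ((v + b) choose b))] (mod int p)"
    using assms by (intro cong_mult cong_refl binomial_reflect_cong) auto
  also have "(-1) ^ v * (-1) ^ b * ((-1) ^ b * int ((v + b) choose b)) = (-1) ^ v * int ((b + v) choose v)"
  proof -
    have "(-1 :: int) ^ b * (-1) ^ b = 1"
      by (simp flip: power_mult_distrib)
    moreover have "(v + b) choose b = (b + v) choose v"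
      using binomial_symmetric[of v "b + v"] by (simp add: add.commute)
    ultimately show ?thesis
      by (simp only: mult.assoc[of "(-1) ^ v"] mult.assoc[of "(-1) ^ b", symmetric] mult_1)
  qed
  also have "[\<dots> = int ((p - 1 - b) choose v)] (mod int p)"
    using assms by (intro cong_sym[OF binomial_reflect_cong]) auto
  finally show ?thesis by (rule cong_sym)
qed

lemma bernoulli_binomial_cong:
  assumes p: "prime p" and "b + v + 2 \<le> p"
  shows "rat_cong0 (bernoulli b / of_nat (p - b) * of_nat ((p - b) choose (v + 1))
    - (-1) ^ v * (of_nat (p - 1 - v) / of_nat (v + 1)) * ((-1) ^ b * faulhaber_coeff (p - 2 - v) b)) p"
proof -
  define C1 C2 where "C1 = (p - b) choose (v + 1)" and "C2 = (p - 1 - b) choose v"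
  have "(v + 1) * C1 = (p - b) * C2"
    unfolding C1_def C2_def using binomial_absorption[of v "p - b"] by (simp add: diff_commute)
  then have "(of_nat (v + 1) :: rat) * of_nat C1 = of_nat (p - b) * of_nat C2"
    by (metis of_nat_mult)
  then have "of_nat C1 / of_nat (p - b) = (of_nat C2 / of_nat (v + 1) :: rat)"
    using assms by (simp add: frac_eq_eq mult.commute)
  then have left: "bernoulli b / of_nat (p - b) * of_nat C1 = bernoulli b / of_nat (v + 1) * of_nat C2"
    by (metis times_divide_eq_left times_divide_eq_right)
  have right: "(-1) ^ v * (of_nat (p - 1 - v) / of_nat (v + 1)) * ((-1) ^ b * faulhaber_coeff (p - 2 - v) b)
      = bernoulli b / of_nat (v + 1) * ((-1) ^ v * (-1) ^ b * of_nat ((p - 1 - v) choose b))"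
    using assms by (simp add: faulhaber_coeff_def Suc_diff_Suc numeral_2_eq_2)
  have "rat_cong0 (bernoulli b / of_nat (v + 1) * (of_int (int C2)
      - of_int ((-1) ^ v * (-1) ^ b * int ((p - 1 - v) choose b)))) p"
    unfolding C2_def using assms
    by (intro rat_cong0_mult_left p_integral_divide_of_nat bernoulli_p_integral rat_cong0_of_int_cong
        binomial_swap_cong) (auto dest: dvd_imp_le)
  then show ?thesis
    unfolding C1_def[symmetric] left right by (simp add: right_diff_distrib)
qed

lemma rat_cong0_convolution:
  assumes p: "prime p" and "even N"
    and u: "\<And>b. b \<le> N \<Longrightarrow> rat_cong0 (u b - c * ((-1) ^ b * f b)) p"
    and w: "\<And>a. a \<le> N \<Longrightarrow> rat_cong0 (w a - d * ((-1) ^ a * g a)) p"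
    and c: "p_integral c p" and d: "p_integral d p"
    and f: "\<And>b. b \<le> N \<Longrightarrow> p_integral (f b) p" and g: "\<And>a. a \<le> N \<Longrightarrow> p_integral (g a) p"
    and fg: "rat_cong0 (\<Sum>a\<le>N. g a * f (N - a)) p"
  shows "rat_cong0 (\<Sum>a\<le>N. u (N - a) * w a) p"
proof -
  have sign_integral: "p_integral ((-1) ^ k) p" for k
    using p by (intro p_integral_power p_integral_minus p_integral_1)
  have "rat_cong0 (u (N - a) * w a - c * ((-1) ^ (N - a) * f (N - a)) * (d * ((-1) ^ a * g a))) p"
    if "a \<le> N" for a
  proof (rule rat_cong0_mult_diff[OF p u[OF diff_le_self] w[OF that]])
    have "p_integral (d * ((-1) ^ a * g a)) p"
      using that by (intro p_integral_mult p d g sign_integral)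
    from p_integral_add[OF p rat_cong0_imp_p_integral[OF p w[OF that]] this]
    show "p_integral (w a) p" by simp
    show "p_integral (c * ((-1) ^ (N - a) * f (N - a))) p"
      by (intro p_integral_mult p c f sign_integral) simp
  qed
  moreover have "c * ((-1) ^ (N - a) * f (N - a)) * (d * ((-1) ^ a * g a)) = c * d * (g a * f (N - a))"
    if "a \<le> N" for a
    using that \<open>even N\<close> by (simp add: algebra_simps flip: power_add)
  ultimately have "rat_cong0 (\<Sum>a\<le>N. u (N - a) * w a - c * d * (g a * f (N - a))) p"
    using p by (auto intro: rat_cong0_sum)
  from rat_cong0_add[OF p this rat_cong0_mult_left[OF p p_integral_mult[OF p c d] fg]]
  show ?thesis by (simp add: sum_subtractf sum_distrib_left)
qed

lemma bernoulli_convolution_cong: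
  assumes p: "prime p" and "even N" and "N + v + 2 \<le> p" and "N + v' + 2 \<le> p"
    and "rat_cong0 (\<Sum>a\<le>N. faulhaber_coeff (p - 2 - v') a * faulhaber_coeff (p - 2 - v) (N - a)) p"
  shows "rat_cong0 (\<Sum>a\<le>N.
    bernoulli (N - a) / of_nat (p - (N - a)) * of_nat ((p - (N - a)) choose (v + 1)) *
    (bernoulli a / of_nat (p - a) * of_nat ((p - a) choose (v' + 1)))) p"
proof -
  define c where "c k = (-1) ^ k * (of_nat (p - 1 - k) / of_nat (k + 1) :: rat)" for k
  have approx: "rat_cong0 (bernoulli b / of_nat (p - b) * of_nat ((p - b) choose (k + 1))
      - c k * ((-1) ^ b * faulhaber_coeff (p - 2 - k) b)) p" if "b \<le> N" "N + k + 2 \<le> p" for b k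
    unfolding c_def using p that by (intro bernoulli_binomial_cong) auto
  have "p_integral (c k) p" if "N + k + 2 \<le> p" for k
    unfolding c_def using that p
    by (intro p_integral_mult p_integral_power p_integral_minus p_integral_1 p_integral_divide_of_nat
        p_integral_of_nat) (auto dest: dvd_imp_le)
  moreover have "p_integral (faulhaber_coeff (p - 2 - k) b) p" if "b \<le> N" "N + k + 2 \<le> p" for k b
    using that p by (intro p_integral_faulhaber_coeff) auto
  ultimately show ?thesis
    using assms approx[of _ v] approx[of _ v']
    by (intro rat_cong0_convolution[OF p \<open>even N\<close>,
        where u = "\<lambda>b. bernoulli b / of_nat (p - b) * of_nat ((p - b) choose (v + 1))"
          and w = "\<lambda>a. bernoulli a / of_nat (p - a) * of_nat ((p - a) choose (v' + 1))"
          and c = "c v" and d = "c v'"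
          and f = "faulhaber_coeff (p - 2 - v)" and g = "faulhaber_coeff (p - 2 - v')"]) simp_all
qed

theorem lemma3p15:
  fixes n p :: nat
  assumes "even n" and "prime p" and "p \<ge> 3 * n + 7"
  shows "rat_cong0 (\<Sum>a = 0..p - 3 * n - 3. let b = p - 3 * n - 3 - a in
            bernoulli b / of_nat (p - b) * of_nat ((p - b) choose (n + 1)) *
            (bernoulli a / of_nat (p - a) * of_nat ((p - a) choose (n + 2)))) p
       \<and> rat_cong0 (\<Sum>a = 0..p - 3 * n - 3. let b = p - 3 * n - 3 - a in
            bernoulli b / of_nat (p - b) * of_nat ((p - b) choose (n + 1)) *
            (bernoulli a / of_nat (p - a) * of_nat ((p - a) choose (n + 1)))) p"
proof -
  define q N where "q = p - n - 3" and "N = p - 3 * n - 3"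
  have q: "q + n + 3 = p" and "N + n + 3 \<le> p" and "p - 2 - n = q + 1" and "p - 2 - (n + 1) = q"
    using assms(3) by (auto simp: q_def N_def)
  have "even N"
    using assms prime_odd_nat[OF assms(2)] unfolding N_def by presburger
  note convolutions = faulhaber_convolution_cong[OF assms q, folded N_def]
  have "rat_cong0 (\<Sum>a\<le>N. bernoulli (N - a) / of_nat (p - (N - a)) * of_nat ((p - (N - a)) choose (n + 1)) *
      (bernoulli a / of_nat (p - a) * of_nat ((p - a) choose (n + 1 + 1)))) p"
    using convolutions(1) \<open>N + n + 3 \<le> p\<close> \<open>p - 2 - n = q + 1\<close> \<open>p - 2 - (n + 1) = q\<close>
    by (intro bernoulli_convolution_cong[OF assms(2) \<open>even N\<close>]) auto
  moreover have "rat_cong0 (\<Sum>a\<le>N. bernoulli (N - a) / of_nat (p - (N - a)) * of_nat ((p - (N - a)) choose (n + 1)) *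
      (bernoulli a / of_nat (p - a) * of_nat ((p - a) choose (n + 1)))) p"
    using convolutions(2) \<open>N + n + 3 \<le> p\<close> \<open>p - 2 - n = q + 1\<close>
    by (intro bernoulli_convolution_cong[OF assms(2) \<open>even N\<close>]) auto
  ultimately show ?thesis
    unfolding N_def Let_def atLeast0AtMost by (simp add: numeral_2_eq_2)
qed

end
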